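(* Let $P,W$ be finite point sets in the plane such that no two distinct points of $P\cup W$ have equal $x$-coordinate or equal $y$-coordinate, and let $p,q\in P$ be distinct. If there is $w\in W$ with $x(w)$ strictly between $x(p)$ and $x(q)$, or with $y(w)$ strictly between $y(p)$ and $y(q)$, then $pq$ is an edge of $\mathrm{SG}^+(P,W)$.
   Context: For finite point sets $P$ (vertices) and $W$ (witnesses) in $\mathbb{R}^2$ (which may share points), the square graph $\mathrm{SG}^+(P,W)$ is the graph with vertex set $P$ in which distinct $x,y\in P$ are adjacent if and only if there is an axis-aligned square with $x$ and $y$ on its boundary whose interior contains at least one point of $W$. $x(\cdot)$ and $y(\cdot)$ denote coordinates. *)

theory Defs
  imports Main "HOL-Analysis.Analysis"
begin

type_synonym point = "real \<times> real"

definition closed_sq :: "real \<Rightarrow> real \<Rightarrow> real \<Rightarrow> point set" where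
  "closed_sq a b s = {z. a \<le> fst z \<and> fst z \<le> a + s \<and> b \<le> snd z \<and> snd z \<le> b + s}"

definition open_sq :: "real \<Rightarrow> real \<Rightarrow> real \<Rightarrow> point set" where
  "open_sq a b s = {z. a < fst z \<and> fst z < a + s \<and> b < snd z \<and> snd z < b + s}"

definition bd_sq :: "real \<Rightarrow> real \<Rightarrow> real \<Rightarrow> point set" where
  "bd_sq a b s = closed_sq a b s - open_sq a b s"

definition SG_edge :: "point set \<Rightarrow> point set \<Rightarrow> point \<Rightarrow> point \<Rightarrow> bool" where
  "SG_edge P W x y \<longleftrightarrow> x \<in> P \<and> y \<in> P \<and> x \<noteq> y \<and>
     (\<exists>a b s. s > 0 \<and> x \<in> bd_sq a b s \<and> y \<in> bd_sq a b s \<and> (\<exists>w\<in>W. w \<in> open_sq a b s))"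

definition strictly_between :: "real \<Rightarrow> real \<Rightarrow> real \<Rightarrow> bool" where
  "strictly_between t u v \<longleftrightarrow> min u v < t \<and> t < max u v"

end

theory Submission
  imports Defs
begin

text \<open>
  Call a square a witness for p, q, w if p and q lie on its boundary and w
  in its interior; an SG+ edge pq is exactly a pair of distinct points of P for which
  some w in W has a witness square.  Suppose x(p) < x(w) < x(q) and y(w) differs from
  y(p).  Take a very large square whose vertical sides are chosen so that one of them
  passes through p or q, and whose bottom or top side passes through the other point;
  which side is used depends only on the vertical order of y(p), y(q), y(w).  Since the
  square is huge, w lies strictly inside.  The witness property is symmetric in p and q
  and invariant under exchanging the two coordinates, which reduces the general
  "strictly between" hypotheses (in x or in y, in either order) to this one case.
  General position guarantees that w avoids the horizontal and vertical lines through
  p and q, which is all the construction needs.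
\<close>

definition square_witness :: "point \<Rightarrow> point \<Rightarrow> point \<Rightarrow> bool" where
  "square_witness p q w \<longleftrightarrow>
     (\<exists>a b s. s > 0 \<and> p \<in> bd_sq a b s \<and> q \<in> bd_sq a b s \<and> w \<in> open_sq a b s)"

lemma bd_sq_iff:
  "z \<in> bd_sq a b s \<longleftrightarrow> z \<in> closed_sq a b s \<and>
     (fst z = a \<or> fst z = a + s \<or> snd z = b \<or> snd z = b + s)"
  by (auto simp: bd_sq_def closed_sq_def open_sq_def)

lemma square_witness_commute: "square_witness p q w \<longleftrightarrow> square_witness q p w"
  unfolding square_witness_def by blast

text \<open>Reflection in the diagonal maps squares to squares, so witnesses are invariant under
  exchanging coordinates; this turns the y-case of the theorem into the x-case.\<close>

lemma square_witness_transpose: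
  "square_witness (prod.swap p) (prod.swap q) (prod.swap w) \<longleftrightarrow> square_witness p q w"
proof -
  have bd: "prod.swap z \<in> bd_sq b a s \<longleftrightarrow> z \<in> bd_sq a b s" for z :: point and a b s
    by (auto simp: bd_sq_def closed_sq_def open_sq_def)
  have op: "prod.swap z \<in> open_sq b a s \<longleftrightarrow> z \<in> open_sq a b s" for z :: point and a b s
    by (auto simp: open_sq_def)
  show ?thesis
    unfolding square_witness_def bd op by blast
qed

text \<open>The basic construction: if w lies strictly between p and q horizontally (p to the left)
  and off the horizontal line through p, a large square with a vertical side through p or q
  and a horizontal side through the other point witnesses p, q, w.\<close>

lemma square_witness_left_right:
  fixes x1 y1 x2 y2 xw yw :: real
  assumes "x1 < xw" "xw < x2" "yw \<noteq> y1"
  shows "square_witness (x1, y1) (x2, y2) (xw, yw)"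
proof -
  \<comment> \<open>the side exceeds every horizontal and vertical distance among the three points\<close>
  define s where "s = \<bar>x2 - x1\<bar> + \<bar>yw - y1\<bar> + \<bar>y2 - y1\<bar> + \<bar>yw - y2\<bar> + 1"
  have "s > 0" unfolding s_def by simp
  have witness: "square_witness (x1, y1) (x2, y2) (xw, yw)"
    if "(x1, y1) \<in> bd_sq a b s" "(x2, y2) \<in> bd_sq a b s" "(xw, yw) \<in> open_sq a b s" for a b
    using that \<open>s > 0\<close> unfolding square_witness_def by blast
  consider "y1 \<le> y2" "y1 < yw" | "y1 \<le> y2" "yw < y2" | "y2 \<le> y1" "yw < y1" | "y2 \<le> y1" "y2 < yw"
    using assms(3) by linarith
  then show ?thesis
  proof cases
    case 1 \<comment> \<open>p on the bottom side, q on the right side\<close>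
    then show ?thesis
      by (intro witness[of "x2 - s" y1]) (use assms in \<open>auto simp: bd_sq_iff closed_sq_def open_sq_def s_def\<close>)
  next
    case 2 \<comment> \<open>p on the left side, q on the top side\<close>
    then show ?thesis
      by (intro witness[of x1 "y2 - s"]) (use assms in \<open>auto simp: bd_sq_iff closed_sq_def open_sq_def s_def\<close>)
  next
    case 3 \<comment> \<open>p on the top side, q on the right side\<close>
    then show ?thesis
      by (intro witness[of "x2 - s" "y1 - s"]) (use assms in \<open>auto simp: bd_sq_iff closed_sq_def open_sq_def s_def\<close>)
  next
    case 4 \<comment> \<open>p on the left side, q on the bottom side\<close>
    then show ?thesis
      by (intro witness[of x1 y2]) (use assms in \<open>auto simp: bd_sq_iff closed_sq_def open_sq_def s_def\<close>)
  qed
qed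

lemma square_witness_between_x:
  fixes p q w :: point
  assumes "strictly_between (fst w) (fst p) (fst q)"
    and "snd w \<noteq> snd p" and "snd w \<noteq> snd q"
  shows "square_witness p q w"
proof (cases "fst p < fst q")
  case True
  then have "fst p < fst w" "fst w < fst q"
    using assms(1) by (auto simp: strictly_between_def)
  then show ?thesis
    using square_witness_left_right[of "fst p" "fst w" "fst q" "snd w" "snd p" "snd q"] assms(2)
    by simp
next
  case False
  then have "fst q < fst w" "fst w < fst p"
    using assms(1) by (auto simp: strictly_between_def)
  then show ?thesis
    using square_witness_left_right[of "fst q" "fst w" "fst p" "snd w" "snd q" "snd p"] assms(3)
    by (simp add: square_witness_commute)
qed

theorem mainTheorem8:
  fixes P W :: "point set" and p q :: point
  assumes "finite P" and "finite W"
    and "\<forall>u\<in>P \<union> W. \<forall>v\<in>P \<union> W. u \<noteq> v \<longrightarrow> fst u \<noteq> fst v \<and> snd u \<noteq> snd v"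
    and "p \<in> P" and "q \<in> P" and "p \<noteq> q"
    and "\<exists>w\<in>W. strictly_between (fst w) (fst p) (fst q) \<or> strictly_between (snd w) (snd p) (snd q)"
  shows "SG_edge P W p q"
proof -
  obtain w where "w \<in> W"
    and between: "strictly_between (fst w) (fst p) (fst q) \<or> strictly_between (snd w) (snd p) (snd q)"
    using assms(7) by blast
  have "w \<noteq> p" "w \<noteq> q"
    using between by (auto simp: strictly_between_def)
  then have general: "fst w \<noteq> fst p" "snd w \<noteq> snd p" "fst w \<noteq> fst q" "snd w \<noteq> snd q"
    using assms(3-5) \<open>w \<in> W\<close> by blast+
  have "square_witness p q w"
    using between
  proof
    assume "strictly_between (fst w) (fst p) (fst q)"
    then show ?thesis using square_witness_between_x general by blast
  next
    assume "strictly_between (snd w) (snd p) (snd q)"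
    then have "square_witness (prod.swap p) (prod.swap q) (prod.swap w)"
      using square_witness_between_x general by simp
    then show ?thesis by (simp add: square_witness_transpose)
  qed
  then show ?thesis
    using assms(4-6) \<open>w \<in> W\<close> unfolding SG_edge_def square_witness_def by blast
qed

end
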